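(* Let $k$ be an odd positive integer. Then $$\sum_{n=1}^{k}\frac{1}{\cos^4(2\pi n/k)}=\sum_{n=1}^{k}\frac{1}{\cos^4(\pi n/k)}=\frac{k^2(k^2+2)}{3}.$$ *)

theory Defs
  imports "HOL-Analysis.Analysis"
begin

end

theory Submission
  imports Defs
begin

text \<open>
  With \<open>z = exp (2 i \<theta>)\<close> one has \<open>1 / cos \<theta> ^ 4 = 16 z\<^sup>2 / (1 + z) ^ 4
  = 16 (1/(1+z)\<^sup>2 - 2/(1+z)\<^sup>3 + 1/(1+z)\<^sup>4)\<close>.  For \<open>k\<close> odd and \<open>z\<close> a \<open>k\<close>-th root of
  unity, \<open>1/(1+z)^m\<close> agrees with an explicit polynomial \<open>\<Sum>j<k. c\<^sub>m j * z^j\<close>,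
  because multiplication by \<open>1 + z\<close> acts on coefficient vectors as a cyclic
  difference operator that can be inverted by hand.  Summing over all \<open>k\<close>-th roots
  of unity kills every monomial except the constant one, so the sum is
  \<open>16 k (c\<^sub>2 0 - 2 c\<^sub>3 0 + c\<^sub>4 0)\<close>.  The angles \<open>a \<pi> n / k\<close> with \<open>a\<close> coprime to \<open>k\<close>
  give exactly these roots, for \<open>a = 1\<close> as well as \<open>a = 2\<close>.
\<close>

definition cyc_poly :: "(nat \<Rightarrow> 'a::comm_ring_1) \<Rightarrow> nat \<Rightarrow> 'a \<Rightarrow> 'a" where
  "cyc_poly c k z = (\<Sum>j<k. c j * z ^ j)"

lemma cyc_poly_mult_one_plus:
  fixes z :: "'a::comm_ring_1"
  assumes "k > 0" "z ^ k = 1"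
    and "\<And>i. Suc i < k \<Longrightarrow> c (Suc i) + c i = d (Suc i)"
    and "c 0 + c (k - 1) = d 0"
  shows "(1 + z) * cyc_poly c k z = cyc_poly d k z"
proof -
  obtain m where k: "k = Suc m" using assms(1) by (cases k) auto
  have zm: "z * z ^ m = 1" using assms(2) k by simp
  have "(1 + z) * cyc_poly c k z = (\<Sum>j<Suc m. c j * z ^ j) + (\<Sum>j<Suc m. c j * z ^ Suc j)"
    by (simp add: cyc_poly_def k distrib_right distrib_left sum.distrib sum_distrib_left mult_ac
        del: sum.lessThan_Suc)
  also have "(\<Sum>j<Suc m. c j * z ^ Suc j) = (\<Sum>j<m. c j * z ^ Suc j) + c m"
    using zm by (simp add: mult.commute)
  also have "(\<Sum>j<Suc m. c j * z ^ j) = c 0 + (\<Sum>j<m. c (Suc j) * z ^ Suc j)"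
    by (subst sum.lessThan_Suc_shift) simp
  finally have lhs: "(1 + z) * cyc_poly c k z
      = c 0 + (\<Sum>j<m. c (Suc j) * z ^ Suc j) + ((\<Sum>j<m. c j * z ^ Suc j) + c m)" .
  have "cyc_poly d k z = d 0 + (\<Sum>j<m. d (Suc j) * z ^ Suc j)"
    unfolding cyc_poly_def k by (subst sum.lessThan_Suc_shift) simp
  also have "(\<Sum>j<m. d (Suc j) * z ^ Suc j) = (\<Sum>j<m. c (Suc j) * z ^ Suc j + c j * z ^ Suc j)"
    using k by (intro sum.cong refl) (simp add: algebra_simps flip: assms(3))
  finally show ?thesis using assms(4) k lhs by (simp add: sum.distrib algebra_simps)
qed

lemma cyc_poly_eq_inverse_power:
  fixes z :: "'a::field"
  assumes "k > 0" "z ^ k = 1" "1 + z \<noteq> 0"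
    and "cyc_poly d k z = 1 / (1 + z) ^ m"
    and "\<And>i. Suc i < k \<Longrightarrow> c (Suc i) + c i = d (Suc i)"
    and "c 0 + c (k - 1) = d 0"
  shows "cyc_poly c k z = 1 / (1 + z) ^ Suc m"
proof -
  have "(1 + z) * cyc_poly c k z = 1 / (1 + z) ^ m"
    using cyc_poly_mult_one_plus[OF assms(1,2,5,6)] assms(4) by simp
  with assms(3) have "cyc_poly c k z = (1 / (1 + z) ^ m) / (1 + z)"
    by (metis nonzero_mult_div_cancel_left)
  then show ?thesis by (simp add: divide_divide_eq_left)
qed

lemma sum_cyc_poly_primitive_root:
  fixes u :: "'a::field"
  assumes "k > 0" "u ^ k = 1" "\<And>j. 0 < j \<Longrightarrow> j < k \<Longrightarrow> u ^ j \<noteq> 1"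
  shows "(\<Sum>n=1..k. cyc_poly c k (u ^ n)) = of_nat k * c 0"
proof -
  have geometric: "(\<Sum>n=1..k. (u ^ j) ^ n) = 0" if j: "0 < j" "j < k" for j
  proof -
    let ?v = "u ^ j"
    have "?v \<noteq> 1" using assms(3) j .
    moreover have "?v ^ k = 1" using assms(2) by (metis power_mult mult.commute power_one)
    moreover have "(1 - ?v) * (\<Sum>n<k. ?v ^ n) = 1 - ?v ^ k"
      by (simp add: one_diff_power_eq)
    ultimately have "(\<Sum>n<k. ?v ^ n) = 0" by simp
    moreover have "(\<Sum>n=1..k. ?v ^ n) = (\<Sum>n<k. ?v ^ Suc n)"
      by (rule sum.reindex_bij_witness[where j="\<lambda>n. n - 1" and i=Suc]) auto
    ultimately show ?thesis by (simp add: sum_distrib_left[symmetric])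
  qed
  have "(\<Sum>n=1..k. cyc_poly c k (u ^ n)) = (\<Sum>j<k. c j * (\<Sum>n=1..k. (u ^ j) ^ n))"
    unfolding cyc_poly_def
    by (subst sum.swap) (simp add: sum_distrib_left power_mult [symmetric] mult.commute)
  also have "\<dots> = (\<Sum>j<k. if j = 0 then c 0 * of_nat k else 0)"
    using geometric by (intro sum.cong refl) auto
  also have "\<dots> = of_nat k * c 0" using assms(1) by (simp add: sum.delta)
  finally show ?thesis .
qed

text \<open>
  The coefficients \<open>inv_coeff\<^sub>m K\<close> represent \<open>1/(1+z)^m\<close> on the \<open>k\<close>-th roots of
  unity, where \<open>K\<close> stands for \<open>k\<close>.  Each one is obtained from the previous by solving
  the recurrence of \<open>cyc_poly_mult_one_plus\<close>; the coefficients of \<open>1/(1+z)^0 = 1\<close>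
  are \<open>1, 0, 0, \<dots>\<close>.
\<close>

definition inv_coeff1 :: "nat \<Rightarrow> complex" where
  "inv_coeff1 j = (-1) ^ j / 2"

definition inv_coeff2 :: "complex \<Rightarrow> nat \<Rightarrow> complex" where
  "inv_coeff2 K j = (-1) ^ j * (of_nat j / 2 + (2 - K) / 4)"

definition inv_coeff3 :: "complex \<Rightarrow> nat \<Rightarrow> complex" where
  "inv_coeff3 K j = (-1) ^ j * ((2 * (of_nat j)\<^sup>2 + (6 - 2 * K) * of_nat j + 4 - 3 * K) / 8)"

definition inv_coeff4 :: "complex \<Rightarrow> nat \<Rightarrow> complex" where
  "inv_coeff4 K j = (-1) ^ j * ((K ^ 3 - 22 * K + 24) / 48
     + (of_nat j * (of_nat j + 1) * (2 * of_nat j + 1) / 3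
        + (3 - K) * of_nat j * (of_nat j + 1) + (4 - 3 * K) * of_nat j) / 8)"

lemma one_plus_root_of_unity_nonzero:
  fixes z :: complex
  assumes "odd k" "z ^ k = 1"
  shows "1 + z \<noteq> 0"
proof
  assume "1 + z = 0"
  then have "z = -1" by (simp add: add_eq_0_iff)
  with assms show False by simp
qed

lemma cyc_poly_inv_coeffs:
  fixes z :: complex
  assumes "odd k" "z ^ k = 1"
  shows "cyc_poly (inv_coeff2 (of_nat k)) k z = 1 / (1 + z) ^ 2"
    and "cyc_poly (inv_coeff3 (of_nat k)) k z = 1 / (1 + z) ^ 3"
    and "cyc_poly (inv_coeff4 (of_nat k)) k z = 1 / (1 + z) ^ 4"
proof -
  obtain t where kt: "k = Suc (2 * t)" using assms(1) oddE by (metis Suc_eq_plus1)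
  have K: "(of_nat k :: complex) = 2 * of_nat t + 1" using kt by simp
  have k0: "k > 0" using kt by simp
  note step = cyc_poly_eq_inverse_power[OF k0 assms(2)
      one_plus_root_of_unity_nonzero[OF assms]]
  have "cyc_poly (\<lambda>j. if j = 0 then 1 else 0) k z = 1 / (1 + z) ^ 0"
  proof -
    have "cyc_poly (\<lambda>j. if j = 0 then 1 else 0) k z = (\<Sum>j<k. if j = 0 then 1 else 0)"
      unfolding cyc_poly_def by (intro sum.cong) auto
    with k0 show ?thesis by simp
  qed
  then have e1: "cyc_poly inv_coeff1 k z = 1 / (1 + z) ^ Suc 0"
    by (rule step) (use kt in \<open>auto simp: inv_coeff1_def\<close>)
  then have e2: "cyc_poly (inv_coeff2 (of_nat k)) k z = 1 / (1 + z) ^ Suc (Suc 0)"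
    by (rule step) (use kt in \<open>auto simp: inv_coeff1_def inv_coeff2_def K field_simps\<close>)
  then have e3: "cyc_poly (inv_coeff3 (of_nat k)) k z = 1 / (1 + z) ^ Suc (Suc (Suc 0))"
    by (rule step) (use kt in \<open>auto simp: inv_coeff2_def inv_coeff3_def K field_simps
        power2_eq_square\<close>)
  then have e4: "cyc_poly (inv_coeff4 (of_nat k)) k z = 1 / (1 + z) ^ Suc (Suc (Suc (Suc 0)))"
    by (rule step) (use kt in \<open>auto simp: inv_coeff3_def inv_coeff4_def K field_simps
        power2_eq_square power3_eq_cube\<close>)
  from e2 e3 e4 show "cyc_poly (inv_coeff2 (of_nat k)) k z = 1 / (1 + z) ^ 2"
    and "cyc_poly (inv_coeff3 (of_nat k)) k z = 1 / (1 + z) ^ 3"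
    and "cyc_poly (inv_coeff4 (of_nat k)) k z = 1 / (1 + z) ^ 4"
    by (simp_all add: numeral_eq_Suc)
qed

lemma sum_sec4_primitive_root:
  fixes u :: complex
  assumes "odd k" "u ^ k = 1" "\<And>j. 0 < j \<Longrightarrow> j < k \<Longrightarrow> u ^ j \<noteq> 1"
  shows "(\<Sum>n=1..k. 16 * (u ^ n)\<^sup>2 / (1 + u ^ n) ^ 4) = of_real (real k ^ 2 * (real k ^ 2 + 2) / 3)"
proof -
  have k0: "k > 0" using assms(1) by (cases k) auto
  have root: "(u ^ n) ^ k = 1" for n
    using assms(2) by (metis mult.commute power_mult power_one)
  have partial_fractions: "16 * z\<^sup>2 / (1 + z) ^ 4
      = 16 * (1 / (1 + z)\<^sup>2 - 2 * (1 / (1 + z) ^ 3) + 1 / (1 + z) ^ 4)" if "1 + z \<noteq> 0" for z :: complex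
  proof -
    have "16 * (w - 1)\<^sup>2 / w ^ 4 = 16 * (1 / w\<^sup>2 - 2 * (1 / w ^ 3) + 1 / w ^ 4)"
      if "w \<noteq> 0" for w :: complex
      using that by (simp add: field_simps power2_eq_square power3_eq_cube power4_eq_xxxx)
    from this[of "1 + z"] that show ?thesis by simp
  qed
  let ?P = "\<lambda>c. \<Sum>n=1..k. cyc_poly c k (u ^ n)"
  have "(\<Sum>n=1..k. 16 * (u ^ n)\<^sup>2 / (1 + u ^ n) ^ 4)
      = 16 * (?P (inv_coeff2 (of_nat k)) - 2 * ?P (inv_coeff3 (of_nat k)) + ?P (inv_coeff4 (of_nat k)))"
    by (simp add: partial_fractions one_plus_root_of_unity_nonzero[OF assms(1) root]
        cyc_poly_inv_coeffs[OF assms(1) root] sum.distrib sum_subtractf sum_distrib_left)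
  also have "\<dots> = 16 * of_nat k * (inv_coeff2 (of_nat k) 0 - 2 * inv_coeff3 (of_nat k) 0
      + inv_coeff4 (of_nat k) 0)"
    by (simp only: sum_cyc_poly_primitive_root[OF k0 assms(2,3)] algebra_simps)
  also have "\<dots> = of_real (real k ^ 2 * (real k ^ 2 + 2) / 3)"
    by (simp add: inv_coeff2_def inv_coeff3_def inv_coeff4_def field_simps
        power2_eq_square power3_eq_cube)
  finally show ?thesis .
qed

lemma sec4_eq_exp:
  fixes \<theta> :: real
  assumes "1 + exp (2 * \<i> * of_real \<theta>) \<noteq> 0"
  shows "complex_of_real (1 / cos \<theta> ^ 4)
         = 16 * (exp (2 * \<i> * of_real \<theta>))\<^sup>2 / (1 + exp (2 * \<i> * of_real \<theta>)) ^ 4"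
proof -
  define e where "e = exp (\<i> * of_real \<theta>)"
  have e0: "e \<noteq> 0" unfolding e_def by simp
  have z: "exp (2 * \<i> * of_real \<theta>) = e\<^sup>2"
    unfolding e_def by (metis exp_of_nat_mult mult.assoc of_nat_numeral)
  have cos: "complex_of_real (cos \<theta>) = (1 + e\<^sup>2) / (2 * e)"
    using e0 unfolding e_def
    by (simp add: cos_of_real[symmetric] cos_exp_eq exp_minus field_simps power2_eq_square)
  have "1 + e\<^sup>2 \<noteq> 0" using assms z by simp
  have "complex_of_real (1 / cos \<theta> ^ 4) = 1 / ((1 + e\<^sup>2) / (2 * e)) ^ 4"
    by (simp add: cos)
  also have "\<dots> = 16 * (e\<^sup>2)\<^sup>2 / (1 + e\<^sup>2) ^ 4"
    using e0 \<open>1 + e\<^sup>2 \<noteq> 0\<close> by (simp add: field_simps power_mult_distrib)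
  finally show ?thesis unfolding z .
qed

lemma primitive_root_exp:
  fixes a k :: nat
  assumes "k > 0" "coprime k a"
  defines "u \<equiv> exp (2 * of_real pi * \<i> * of_nat a / of_nat k)"
  shows "u ^ k = 1" and "\<And>j. 0 < j \<Longrightarrow> j < k \<Longrightarrow> u ^ j \<noteq> 1"
proof -
  have u_pow: "u ^ j = exp (2 * of_real pi * \<i> * of_nat (a * j) / of_nat k)" for j
    unfolding u_def by (subst exp_of_nat_mult[symmetric]) (simp add: field_simps)
  have u_pow_eq_1: "u ^ j = 1 \<longleftrightarrow> k dvd j" for j
    using complex_root_unity_eq_1[of k "a * j"] assms(1,2)
    by (simp add: u_pow coprime_dvd_mult_right_iff)
  show "u ^ k = 1" by (simp add: u_pow_eq_1)
  show "u ^ j \<noteq> 1" if "0 < j" "j < k" for j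
    using that by (auto simp: u_pow_eq_1 dest: dvd_imp_le)
qed

lemma sum_sec4_coprime_multiple:
  fixes k a :: nat
  assumes "odd k" "coprime k a"
  shows "(\<Sum>n=1..k. 1 / (cos (real a * pi * real n / real k)) ^ 4) = real k ^ 2 * (real k ^ 2 + 2) / 3"
proof -
  have k0: "k > 0" using assms(1) by (cases k) auto
  define u where "u = exp (2 * of_real pi * \<i> * of_nat a / of_nat k)"
  note root = primitive_root_exp[OF k0 assms(2), folded u_def]
  have angle: "exp (2 * \<i> * of_real (real a * pi * real n / real k)) = u ^ n" for n
    unfolding u_def by (subst exp_of_nat_mult[symmetric]) (simp add: field_simps)
  have "1 + u ^ n \<noteq> 0" for n
    using root(1) one_plus_root_of_unity_nonzero[OF assms(1)]
    by (metis mult.commute power_mult power_one)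
  then have sec4_term: "complex_of_real (1 / (cos (real a * pi * real n / real k)) ^ 4)
      = 16 * (u ^ n)\<^sup>2 / (1 + u ^ n) ^ 4" for n
    using sec4_eq_exp[of "real a * pi * real n / real k", unfolded angle] by blast
  have "complex_of_real (\<Sum>n=1..k. 1 / (cos (real a * pi * real n / real k)) ^ 4)
      = (\<Sum>n=1..k. 16 * (u ^ n)\<^sup>2 / (1 + u ^ n) ^ 4)"
    unfolding of_real_sum sec4_term ..
  also have "\<dots> = of_real (real k ^ 2 * (real k ^ 2 + 2) / 3)"
    by (rule sum_sec4_primitive_root[OF assms(1) root])
  finally show ?thesis by (simp only: of_real_eq_iff)
qed

theorem mainTheorem2:
  fixes k :: nat
  assumes "odd k" and "k > 0"
  shows "(\<Sum>n=1..k. 1 / (cos (2 * pi * real n / real k)) ^ 4)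
           = (\<Sum>n=1..k. 1 / (cos (pi * real n / real k)) ^ 4)
       \<and> (\<Sum>n=1..k. 1 / (cos (pi * real n / real k)) ^ 4)
           = real k ^ 2 * (real k ^ 2 + 2) / 3"
  using sum_sec4_coprime_multiple[OF assms(1), of 1]
    sum_sec4_coprime_multiple[OF assms(1), of 2] assms(1)
  by simp

end
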